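(* Let $n,m$ be integers with either $m=n-1\geq 0$ or $m=n-2\geq 0$, and let $H(s)=Q_{nm}(s)/P_{nm}(s)$ be the $(n,m)$ Padé approximant of $e^{-s}$. Then $H$ yields a maximally flat approximation of order $n$ of the ideal (unit-amplitude) lowpass characteristic: $$|H(j\omega)|^2=1+c\,\omega^{2n}+O(\omega^{2n+2})\quad(\omega\to0)$$ for some constant $c\neq0$.
   Context: The $(n,m)$ Padé approximant of $e^{-s}$ is $Q_{nm}(s)/P_{nm}(s)$ with $Q_{nm}(s)=\frac{n!}{(n+m)!}\sum_{k=0}^{m}\binom{m}{k}\frac{(n+k)!}{n!}(-s)^{m-k}$ and $P_{nm}(s)=\frac{m!}{(n+m)!}\sum_{k=0}^{n}\binom{n}{k}\frac{(m+k)!}{m!}s^{n-k}$ (equivalently, the unique rational function with $\deg Q\le m$, $\deg P\le n$, $P(0)=1$, $P(s)e^{-s}-Q(s)=O(s^{n+m+1})$). An amplitude approximation of unit amplitude is maximally flat of order $k$ if, apart from the constant term $1$, the Taylor expansion of $|H(j\omega)|^2$ about $\omega=0$ begins with the term in $\omega^{2k}$. *)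

theory Defs
  imports "HOL-Analysis.Analysis" "HOL-Library.Landau_Symbols"
begin

definition pade_Q :: "nat \<Rightarrow> nat \<Rightarrow> complex \<Rightarrow> complex" where
  "pade_Q n m s = (fact n / fact (n + m)) *
     (\<Sum>k\<le>m. of_nat (m choose k) * (fact (n + k) / fact n) * (- s) ^ (m - k))"

definition pade_P :: "nat \<Rightarrow> nat \<Rightarrow> complex \<Rightarrow> complex" where
  "pade_P n m s = (fact m / fact (n + m)) *
     (\<Sum>k\<le>n. of_nat (n choose k) * (fact (m + k) / fact m) * s ^ (n - k))"

definition pade_H :: "nat \<Rightarrow> nat \<Rightarrow> complex \<Rightarrow> complex" where
  "pade_H n m s = pade_Q n m s / pade_P n m s"

definition maximally_flat_of_order :: "(complex \<Rightarrow> complex) \<Rightarrow> nat \<Rightarrow> bool" where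
  "maximally_flat_of_order H k \<longleftrightarrow>
     (\<exists>c::real. c \<noteq> 0 \<and>
        (\<lambda>\<omega>::real. (cmod (H (\<i> * complex_of_real \<omega>)))\<^sup>2 - 1 - c * \<omega> ^ (2 * k))
          \<in> O[at 0](\<lambda>\<omega>. \<omega> ^ (2 * k + 2)))"

end

theory Submission
  imports Defs "HOL-Computational_Algebra.Formal_Power_Series"
begin

text \<open>
  Multiplying the Pade property \<open>e^(-s) P(s) = Q(s) + O(s^(n+m+1))\<close> by its image under
  \<open>s \<mapsto> -s\<close> gives \<open>P(s) P(-s) = Q(s) Q(-s) + O(s^(n+m+1))\<close>. Both sides are even polynomials of
  degree at most \<open>2n\<close> and \<open>n + m + 1 \<ge> 2n - 1\<close>, so they differ by \<open>(-1)^n p\<^sub>n\<^sup>2 s^(2n)\<close>, where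
  \<open>p\<^sub>n\<close> is the leading coefficient of \<open>P\<close> (\<open>deg Q = m < n\<close>). On the imaginary axis this reads
  \<open>|P(j\<omega>)|\<^sup>2 - |Q(j\<omega>)|\<^sup>2 = p\<^sub>n\<^sup>2 \<omega>^(2n)\<close>, and as \<open>|P(j\<omega>)|\<^sup>2 = 1 + O(\<omega>\<^sup>2)\<close>,
  \<open>|H(j\<omega>)|\<^sup>2 = 1 - p\<^sub>n\<^sup>2 \<omega>^(2n) / |P(j\<omega>)|\<^sup>2 = 1 - p\<^sub>n\<^sup>2 \<omega>^(2n) + O(\<omega>^(2n+2))\<close>.
\<close>

lemma fps_nth_mult_cong:
  fixes A B :: "'a::semiring_0 fps"
  assumes "\<And>i. i \<le> k \<Longrightarrow> fps_nth A i = fps_nth A' i" and "\<And>i. i \<le> k \<Longrightarrow> fps_nth B i = fps_nth B' i"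
  shows "fps_nth (A * B) k = fps_nth (A' * B') k"
  unfolding fps_mult_nth using assms by (intro sum.cong) auto

lemma fps_nth_mult_top:
  fixes F G :: "'a::semiring_0 fps"
  assumes "\<And>i. M < i \<Longrightarrow> fps_nth F i = 0" and "\<And>i. M' < i \<Longrightarrow> fps_nth G i = 0"
  shows "fps_nth (F * G) (M + M') = fps_nth F M * fps_nth G M'"
proof -
  have "fps_nth F i * fps_nth G (M + M' - i) = (if i = M then fps_nth F M * fps_nth G M' else 0)"
    if "i \<in> {0..M + M'}" for i
    using that assms(1)[of i] assms(2)[of "M + M' - i"] by (cases "M < i") auto
  then show ?thesis
    unfolding fps_mult_nth by (subst sum.cong[OF refl]) auto
qed

lemma fps_nth_mult_above:
  fixes F G :: "'a::semiring_0 fps"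
  assumes "\<And>i. M < i \<Longrightarrow> fps_nth F i = 0" and "\<And>i. M' < i \<Longrightarrow> fps_nth G i = 0" and "M + M' < k"
  shows "fps_nth (F * G) k = 0"
proof -
  have "fps_nth F i * fps_nth G (k - i) = 0" for i
    using assms by (cases "M < i") auto
  then show ?thesis
    unfolding fps_mult_nth by simp
qed

lemma fps_compose_neg_X_compose_neg_X [simp]:
  "(F oo - fps_X) oo - fps_X = (F :: 'a::idom fps)"
proof -
  have "- fps_X oo - fps_X = (fps_X :: 'a fps)"
    by (simp add: fps_compose_uminus' fps_eq_iff)
  then show ?thesis
    by (simp add: fps_compose_assoc[symmetric])
qed

lemma fps_nth_mult_compose_neg_X_odd:
  fixes F :: "'a::field_char_0 fps"
  assumes "odd k"
  shows "fps_nth (F * (F oo - fps_X)) k = 0"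
proof -
  let ?E = "F * (F oo - fps_X)"
  have "?E oo - fps_X = ?E"
    by (simp add: fps_compose_mult_distrib mult.commute)
  then have "fps_nth ?E k = (-1) ^ k * fps_nth ?E k"
    by (metis fps_compose_uminus' fps_nth_Abs_fps)
  then show ?thesis
    using assms by simp
qed

text \<open>For \<open>x = n + 1\<close> the coefficients of index at most \<open>n + m\<close> are those of \<open>P\<^sub>n\<^sub>m\<close> up to the
  factor \<open>(n + m)! / n!\<close>, while the product with \<open>e^(-s)\<close> is a polynomial of degree \<open>m\<close>:
  this is how the Pade property is proved.\<close>
definition pochhammer_fps :: "real \<Rightarrow> nat \<Rightarrow> real fps" where
  "pochhammer_fps x m = Abs_fps (\<lambda>i. pochhammer (x - of_nat i) m / fact i)"

lemma fps_deriv_pochhammer_fps: "fps_deriv (pochhammer_fps x m) = pochhammer_fps (x - 1) m"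
proof (rule fps_ext)
  fix i
  have "fact (Suc i) = real (Suc i) * fact i" and "x - real (Suc i) = x - 1 - real i"
    by simp_all
  then show "fps_nth (fps_deriv (pochhammer_fps x m)) i = fps_nth (pochhammer_fps (x - 1) m) i"
    by (simp add: pochhammer_fps_def del: of_nat_Suc fact_Suc) (simp add: algebra_simps)
qed

lemma pochhammer_minus_1_diff:
  "pochhammer (x - 1) (Suc k) - pochhammer x (Suc k) = - of_nat (Suc k) * pochhammer (x :: 'a::comm_ring_1) k"
proof -
  have "pochhammer (x - 1) (Suc k) = (x - 1) * pochhammer x k"
    by (simp add: pochhammer_rec)
  then show ?thesis
    by (simp add: pochhammer_Suc algebra_simps)
qed

lemma binomial_pochhammer_recurrence:
  fixes x :: real
  shows "(-1) ^ j * of_nat (m choose j) * (pochhammer (x - 1) (m - j) - pochhammer x (m - j))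
       = of_nat (Suc j) * ((-1) ^ Suc j * of_nat (m choose Suc j) * pochhammer x (m - Suc j))"
proof (cases "j < m")
  case True
  then obtain k where k: "m - j = Suc k" "m - Suc j = k"
    by (metis Suc_diff_Suc)
  have "Suc j * (m choose Suc j) = Suc k * (m choose j)"
    using k by (metis binomial_absorption binomial_absorb_comp)
  then have choose: "real (Suc k) * real (m choose j) = real (Suc j) * real (m choose Suc j)"
    by (metis of_nat_mult)
  have "(-1) ^ j * of_nat (m choose j) * (pochhammer (x - 1) (m - j) - pochhammer x (m - j))
      = - ((-1) ^ j * pochhammer x k * (real (Suc k) * real (m choose j)))"
    unfolding k pochhammer_minus_1_diff by (simp add: algebra_simps)
  also have "\<dots> = - ((-1) ^ j * pochhammer x k * (real (Suc j) * real (m choose Suc j)))"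
    by (simp only: choose)
  finally show ?thesis
    using k by (simp add: algebra_simps)
qed simp

lemma fps_nth_exp_neg_mult_pochhammer_fps:
  "fps_nth (fps_exp (-1) * pochhammer_fps x m) j = (-1) ^ j * of_nat (m choose j) * pochhammer x (m - j)"
proof (induction j arbitrary: x)
  case 0
  then show ?case by (simp add: pochhammer_fps_def fps_mult_nth)
next
  case (Suc j)
  have exp_deriv: "fps_deriv (fps_exp (-1 :: real)) = - fps_exp (-1)"
    by (simp add: fps_eq_iff)
  have deriv: "fps_deriv (fps_exp (-1) * pochhammer_fps x m)
      = fps_exp (-1) * pochhammer_fps (x - 1) m - fps_exp (-1) * pochhammer_fps x m"
    unfolding fps_deriv_mult exp_deriv fps_deriv_pochhammer_fps by (simp add: algebra_simps)
  have "of_nat (Suc j) * fps_nth (fps_exp (-1) * pochhammer_fps x m) (Suc j)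
      = fps_nth (fps_deriv (fps_exp (-1) * pochhammer_fps x m)) j"
    by (subst fps_deriv_nth) simp
  also have "\<dots> = (-1) ^ j * of_nat (m choose j) * (pochhammer (x - 1) (m - j) - pochhammer x (m - j))"
    unfolding deriv fps_sub_nth Suc.IH by (simp add: algebra_simps)
  finally show ?case
    unfolding binomial_pochhammer_recurrence by (rule mult_left_cancel[THEN iffD1, rotated]) simp
qed

lemma pochhammer_Suc_of_nat: "pochhammer (of_nat k + 1) m = (fact (k + m) / fact k :: 'a::field_char_0)"
proof (induction m)
  case (Suc m)
  have "pochhammer (of_nat k + 1) (Suc m) = pochhammer (of_nat k + 1) m * (of_nat k + 1 + of_nat m :: 'a)"
    by (simp only: pochhammer_Suc)
  also have "\<dots> = fact (k + m) / fact k * of_nat (Suc (k + m))"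
    using Suc by simp
  finally show ?case
    by simp
qed simp

definition pade_P_fps :: "nat \<Rightarrow> nat \<Rightarrow> real fps" where
  "pade_P_fps n m = Abs_fps (\<lambda>i. of_nat (n choose i) * fact (n + m - i) / fact (n + m))"

definition pade_Q_fps :: "nat \<Rightarrow> nat \<Rightarrow> real fps" where
  "pade_Q_fps n m = Abs_fps (\<lambda>i. (-1) ^ i * of_nat (m choose i) * fact (n + m - i) / fact (n + m))"

lemma fps_nth_pade_P_fps_eq_0: "n < i \<Longrightarrow> fps_nth (pade_P_fps n m) i = 0"
  by (simp add: pade_P_fps_def)

lemma fps_nth_pade_Q_fps_eq_0: "m < i \<Longrightarrow> fps_nth (pade_Q_fps n m) i = 0"
  by (simp add: pade_Q_fps_def)

lemma fps_nth_pade_P_fps_0: "fps_nth (pade_P_fps n m) 0 = 1"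
  by (simp add: pade_P_fps_def)

lemma fps_nth_pade_P_fps_top_pos: "0 < fps_nth (pade_P_fps n m) n"
  by (simp add: pade_P_fps_def)

lemma fps_nth_pade_P_fps_eq_pochhammer_fps:
  assumes "i \<le> n + m"
  shows "fps_nth (pade_P_fps n m) i = fact n / fact (n + m) * fps_nth (pochhammer_fps (of_nat n + 1) m) i"
proof (cases "i \<le> n")
  case True
  have "of_nat n + 1 - of_nat i = (of_nat (n - i) + 1 :: real)" and "n - i + m = n + m - i"
    using True by simp_all
  then have "pochhammer (of_nat n + 1 - of_nat i) m = (fact (n + m - i) / fact (n - i) :: real)"
    by (simp only: pochhammer_Suc_of_nat)
  moreover have "real (n choose i) = fact n / (fact i * fact (n - i))"
    using True by (rule binomial_fact)
  ultimately show ?thesis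
    by (simp add: pade_P_fps_def pochhammer_fps_def)
next
  case False
  then have "pochhammer (of_nat n + 1 - of_nat i) m = (0 :: real)"
    using assms by (auto simp: pochhammer_eq_0_iff intro!: exI[of _ "i - n - 1"])
  then show ?thesis
    using False by (simp add: pade_P_fps_def pochhammer_fps_def)
qed

lemma fps_nth_exp_neg_mult_pade_P_fps:
  assumes "j \<le> n + m"
  shows "fps_nth (fps_exp (-1) * pade_P_fps n m) j = fps_nth (pade_Q_fps n m) j"
proof -
  have "fps_nth (fps_exp (-1) * pade_P_fps n m) j
      = fact n / fact (n + m) * fps_nth (fps_exp (-1) * pochhammer_fps (of_nat n + 1) m) j"
    unfolding fps_mult_nth sum_distrib_left using assms
    by (intro sum.cong) (auto simp: fps_nth_pade_P_fps_eq_pochhammer_fps mult_ac)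
  also have "\<dots> = fact n / fact (n + m) * ((-1) ^ j * of_nat (m choose j) * pochhammer (of_nat n + 1) (m - j))"
    by (simp only: fps_nth_exp_neg_mult_pochhammer_fps)
  also have "\<dots> = fps_nth (pade_Q_fps n m) j"
    by (cases "j \<le> m") (simp_all add: pade_Q_fps_def pochhammer_Suc_of_nat)
  finally show ?thesis .
qed

lemma pade_P_eq_sum: "pade_P n m s = (\<Sum>i\<le>n. of_real (fps_nth (pade_P_fps n m) i) * s ^ i)"
proof -
  have "(\<Sum>i\<le>n. of_real (fps_nth (pade_P_fps n m) i) * s ^ i)
      = (\<Sum>k\<le>n. of_real (fps_nth (pade_P_fps n m) (n - k)) * s ^ (n - k))"
    using sum.atLeastAtMost_rev[of "\<lambda>i. of_real (fps_nth (pade_P_fps n m) i) * s ^ i" 0 n]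
    by (simp add: atLeast0AtMost)
  also have "\<dots> = pade_P n m s"
    unfolding pade_P_def sum_distrib_left
  proof (intro sum.cong refl)
    fix k assume "k \<in> {..n}"
    then have "n choose (n - k) = n choose k" and "n + m - (n - k) = m + k"
      using binomial_symmetric[of k n] by simp_all
    then show "of_real (fps_nth (pade_P_fps n m) (n - k)) * s ^ (n - k)
        = fact m / fact (n + m) * (of_nat (n choose k) * (fact (m + k) / fact m) * s ^ (n - k))"
      by (simp add: pade_P_fps_def)
  qed
  finally show ?thesis ..
qed

lemma pade_Q_eq_sum:
  assumes "m \<le> n"
  shows "pade_Q n m s = (\<Sum>i\<le>n. of_real (fps_nth (pade_Q_fps n m) i) * s ^ i)"
proof -
  have "(\<Sum>i\<le>n. of_real (fps_nth (pade_Q_fps n m) i) * s ^ i)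
      = (\<Sum>i\<le>m. of_real (fps_nth (pade_Q_fps n m) i) * s ^ i)"
    using assms by (intro sum.mono_neutral_right) (auto simp: fps_nth_pade_Q_fps_eq_0)
  also have "\<dots> = (\<Sum>k\<le>m. of_real (fps_nth (pade_Q_fps n m) (m - k)) * s ^ (m - k))"
    using sum.atLeastAtMost_rev[of "\<lambda>i. of_real (fps_nth (pade_Q_fps n m) i) * s ^ i" 0 m]
    by (simp add: atLeast0AtMost)
  also have "\<dots> = pade_Q n m s"
    unfolding pade_Q_def sum_distrib_left
  proof (intro sum.cong refl)
    fix k assume "k \<in> {..m}"
    then have "m choose (m - k) = m choose k" and "n + m - (m - k) = n + k"
      using binomial_symmetric[of k m] by simp_all
    then show "of_real (fps_nth (pade_Q_fps n m) (m - k)) * s ^ (m - k)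
        = fact n / fact (n + m) * (of_nat (m choose k) * (fact (n + k) / fact n) * (- s) ^ (m - k))"
      by (simp add: pade_Q_fps_def power_minus[of s])
  qed
  finally show ?thesis ..
qed

lemma sum_mult_sum_uminus_eq_fps_mult_compose_neg_X:
  fixes F :: "real fps" and s :: complex
  assumes "\<And>i. N < i \<Longrightarrow> fps_nth F i = 0"
  shows "(\<Sum>i\<le>N. of_real (fps_nth F i) * s ^ i) * (\<Sum>i\<le>N. of_real (fps_nth F i) * (- s) ^ i)
       = (\<Sum>r\<le>N + N. of_real (fps_nth (F * (F oo - fps_X)) r) * s ^ r)"
proof -
  have "(\<Sum>i\<le>N. of_real (fps_nth F i) * (- s) ^ i) = (\<Sum>i\<le>N. of_real ((-1) ^ i * fps_nth F i) * s ^ i)"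
    by (simp add: power_minus[of s] mult_ac)
  also have "(\<Sum>i\<le>N. of_real (fps_nth F i) * s ^ i) * \<dots>
      = (\<Sum>r\<le>N + N. (\<Sum>k\<le>r. of_real (fps_nth F k) * of_real ((-1) ^ (r - k) * fps_nth F (r - k))) * s ^ r)"
    by (rule polynomial_product) (simp_all add: assms)
  also have "\<dots> = (\<Sum>r\<le>N + N. of_real (fps_nth (F * (F oo - fps_X)) r) * s ^ r)"
    by (simp add: fps_mult_nth fps_compose_uminus' atLeast0AtMost)
  finally show ?thesis .
qed

lemma fps_nth_pade_mult_compose_neg_X_eq:
  assumes "j \<le> n + m"
  shows "fps_nth (pade_P_fps n m * (pade_P_fps n m oo - fps_X)) j
       = fps_nth (pade_Q_fps n m * (pade_Q_fps n m oo - fps_X)) j"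
proof -
  let ?E = "fps_exp (-1) * pade_P_fps n m"
  have "pade_P_fps n m * (pade_P_fps n m oo - fps_X) = ?E * (?E oo - fps_X)"
    by (simp add: fps_compose_mult_distrib mult_ac flip: fps_exp_add_mult)
  also have "fps_nth \<dots> j = fps_nth (pade_Q_fps n m * (pade_Q_fps n m oo - fps_X)) j"
    using \<open>j \<le> n + m\<close> by (intro fps_nth_mult_cong)
      (simp_all add: fps_compose_uminus' fps_nth_exp_neg_mult_pade_P_fps)
  finally show ?thesis .
qed

lemma fps_nth_pade_mult_compose_neg_X_diff:
  assumes "m < n" and "n \<le> m + 2" and "r \<le> n + n"
  shows "fps_nth (pade_P_fps n m * (pade_P_fps n m oo - fps_X)) r
         - fps_nth (pade_Q_fps n m * (pade_Q_fps n m oo - fps_X)) r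
       = (if r = 2 * n then (-1) ^ n * (fps_nth (pade_P_fps n m) n)\<^sup>2 else 0)"
proof (cases "r = 2 * n")
  case True
  have "fps_nth (pade_P_fps n m * (pade_P_fps n m oo - fps_X)) (n + n)
      = fps_nth (pade_P_fps n m) n * ((-1) ^ n * fps_nth (pade_P_fps n m) n)"
    by (subst fps_nth_mult_top[of n _ n]) (simp_all add: fps_compose_uminus' fps_nth_pade_P_fps_eq_0)
  moreover have "fps_nth (pade_Q_fps n m * (pade_Q_fps n m oo - fps_X)) (n + n) = 0"
    using \<open>m < n\<close> by (intro fps_nth_mult_above[of m _ m])
      (simp_all add: fps_compose_uminus' fps_nth_pade_Q_fps_eq_0)
  ultimately show ?thesis
    using True by (simp add: mult_2 power2_eq_square)
next
  case False
  have "fps_nth (pade_P_fps n m * (pade_P_fps n m oo - fps_X)) r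
      = fps_nth (pade_Q_fps n m * (pade_Q_fps n m oo - fps_X)) r"
  proof (cases "r \<le> n + m")
    case True
    then show ?thesis
      by (rule fps_nth_pade_mult_compose_neg_X_eq)
  next
    case False
    then have "odd r"
      using \<open>r \<noteq> 2 * n\<close> assms by presburger
    then show ?thesis
      by (simp add: fps_nth_mult_compose_neg_X_odd)
  qed
  then show ?thesis
    using False by simp
qed

lemma pade_even_product_difference:
  assumes "m < n" and "n \<le> m + 2"
  shows "pade_P n m s * pade_P n m (- s) - pade_Q n m s * pade_Q n m (- s)
       = of_real ((-1) ^ n * (fps_nth (pade_P_fps n m) n)\<^sup>2) * s ^ (2 * n)"
proof -
  let ?EP = "pade_P_fps n m * (pade_P_fps n m oo - fps_X)"
  let ?EQ = "pade_Q_fps n m * (pade_Q_fps n m oo - fps_X)"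
  have "pade_P n m s * pade_P n m (- s) = (\<Sum>r\<le>n + n. of_real (fps_nth ?EP r) * s ^ r)"
    unfolding pade_P_eq_sum
    by (rule sum_mult_sum_uminus_eq_fps_mult_compose_neg_X) (rule fps_nth_pade_P_fps_eq_0)
  moreover have "pade_Q n m s * pade_Q n m (- s) = (\<Sum>r\<le>n + n. of_real (fps_nth ?EQ r) * s ^ r)"
    unfolding pade_Q_eq_sum[OF less_imp_le[OF \<open>m < n\<close>]]
    by (rule sum_mult_sum_uminus_eq_fps_mult_compose_neg_X)
      (use \<open>m < n\<close> in \<open>simp add: fps_nth_pade_Q_fps_eq_0\<close>)
  ultimately have "pade_P n m s * pade_P n m (- s) - pade_Q n m s * pade_Q n m (- s)
      = (\<Sum>r\<le>n + n. of_real (fps_nth ?EP r - fps_nth ?EQ r) * s ^ r)"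
    by (simp add: sum_subtractf left_diff_distrib)
  also have "\<dots> = (\<Sum>r\<le>n + n. if r = 2 * n
      then of_real ((-1) ^ n * (fps_nth (pade_P_fps n m) n)\<^sup>2) * s ^ (2 * n) else 0)"
    using assms by (intro sum.cong) (simp_all add: fps_nth_pade_mult_compose_neg_X_diff)
  also have "\<dots> = of_real ((-1) ^ n * (fps_nth (pade_P_fps n m) n)\<^sup>2) * s ^ (2 * n)"
    by simp
  finally show ?thesis .
qed

lemma norm_square_sum_real_coeffs:
  fixes c :: "nat \<Rightarrow> real" and z :: complex
  shows "of_real ((cmod (\<Sum>i\<le>N. of_real (c i) * z ^ i))\<^sup>2)
       = (\<Sum>i\<le>N. of_real (c i) * z ^ i) * (\<Sum>i\<le>N. of_real (c i) * cnj z ^ i)"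
  unfolding complex_norm_square by simp

lemma sum_power_eq_1_plus_square_mult:
  fixes c :: "nat \<Rightarrow> 'a::comm_ring_1"
  assumes "c 0 = 1" and "c 1 = 0"
  shows "(\<Sum>r\<le>N + 2. c r * z ^ r) = 1 + z\<^sup>2 * (\<Sum>r\<le>N. c (r + 2) * z ^ r)"
  using assms by (simp add: sum.atMost_Suc_shift sum_distrib_left power2_eq_square mult_ac del: sum.atMost_Suc)

lemma norm_square_sum_imag_axis_expansion:
  fixes F :: "real fps"
  assumes deg: "\<And>i. N < i \<Longrightarrow> fps_nth F i = 0" and "fps_nth F 0 = 1"
  obtains g where "isCont g 0"
    and "\<And>w. (cmod (\<Sum>i\<le>N. of_real (fps_nth F i) * (\<i> * of_real w) ^ i))\<^sup>2 = 1 + w\<^sup>2 * g w"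
proof
  let ?E = "F * (F oo - fps_X)"
  define g where "g w = - Re (\<Sum>r\<le>N + N. of_real (fps_nth ?E (r + 2)) * (\<i> * of_real w) ^ r)" for w
  show "isCont g 0"
    unfolding g_def by (intro isCont_Re continuous_intros)
  fix w :: real
  let ?z = "\<i> * of_real w"
  have "of_real ((cmod (\<Sum>i\<le>N. of_real (fps_nth F i) * ?z ^ i))\<^sup>2)
      = (\<Sum>i\<le>N. of_real (fps_nth F i) * ?z ^ i) * (\<Sum>i\<le>N. of_real (fps_nth F i) * (- ?z) ^ i)"
    by (simp only: norm_square_sum_real_coeffs) simp
  also have "\<dots> = (\<Sum>i\<le>Suc N. of_real (fps_nth F i) * ?z ^ i) * (\<Sum>i\<le>Suc N. of_real (fps_nth F i) * (- ?z) ^ i)"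
    by (simp add: deg)
  also have "\<dots> = (\<Sum>r\<le>(N + N) + 2. of_real (fps_nth ?E r) * ?z ^ r)"
  proof -
    have "(N + N) + 2 = Suc N + Suc N"
      by simp
    then show ?thesis
      by (simp only:) (rule sum_mult_sum_uminus_eq_fps_mult_compose_neg_X, simp add: deg)
  qed
  also have "\<dots> = 1 + ?z\<^sup>2 * (\<Sum>r\<le>N + N. of_real (fps_nth ?E (r + 2)) * ?z ^ r)"
    using \<open>fps_nth F 0 = 1\<close> fps_nth_mult_compose_neg_X_odd[of 1 F]
    by (intro sum_power_eq_1_plus_square_mult) (simp_all add: fps_mult_nth fps_compose_uminus')
  finally have "Re (of_real ((cmod (\<Sum>i\<le>N. of_real (fps_nth F i) * ?z ^ i))\<^sup>2))
      = Re (1 + ?z\<^sup>2 * (\<Sum>r\<le>N + N. of_real (fps_nth ?E (r + 2)) * ?z ^ r))"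
    by (rule arg_cong)
  then show "(cmod (\<Sum>i\<le>N. of_real (fps_nth F i) * ?z ^ i))\<^sup>2 = 1 + w\<^sup>2 * g w"
    by (simp only: Re_complex_of_real) (simp add: g_def power_mult_distrib)
qed

lemma maximally_flat_of_order_quotient:
  fixes P Q :: "complex \<Rightarrow> complex" and g :: "real \<Rightarrow> real" and c :: real
  assumes P_near_1: "\<And>w. (cmod (P (\<i> * of_real w)))\<^sup>2 = 1 + w\<^sup>2 * g w" and "isCont g 0"
    and diff: "\<And>w. (cmod (P (\<i> * of_real w)))\<^sup>2 - (cmod (Q (\<i> * of_real w)))\<^sup>2 = c * w ^ (2 * k)"
    and "c \<noteq> 0"
  shows "maximally_flat_of_order (\<lambda>s. Q s / P s) k"
proof -
  define a where "a = (\<lambda>w. 1 + w\<^sup>2 * g w)"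
  define K where "K = (\<lambda>w. c * g w / a w)"
  let ?err = "\<lambda>w::real. (cmod (Q (\<i> * of_real w) / P (\<i> * of_real w)))\<^sup>2 - 1 - (- c) * w ^ (2 * k)"
  have "isCont a 0" "a 0 = 1"
    using \<open>isCont g 0\<close> by (simp_all add: a_def)
  then have "isCont K 0"
    unfolding K_def using \<open>isCont g 0\<close> by (intro continuous_intros) auto
  have a_ne_0: "eventually (\<lambda>w. a w \<noteq> 0) (at 0)"
    using \<open>isCont a 0\<close> \<open>a 0 = 1\<close> tendsto_imp_eventually_ne[of a 1 "at 0" 0]
    by (simp add: isCont_def)
  have "eventually (\<lambda>w::real. w \<noteq> 0) (at 0)"
    by (simp add: eventually_at_filter)
  with a_ne_0 have "eventually (\<lambda>w. ?err w / w ^ (2 * k + 2) = K w) (at 0)"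
  proof eventually_elim
    case (elim w)
    have "(cmod (Q (\<i> * of_real w) / P (\<i> * of_real w)))\<^sup>2 = (a w - c * w ^ (2 * k)) / a w"
      using diff[of w] P_near_1[of w] by (simp add: a_def norm_divide power_divide)
    then have "?err w = c * w ^ (2 * k) * (a w - 1) / a w"
      using elim by (simp add: field_simps)
    also have "a w - 1 = w\<^sup>2 * g w"
      by (simp add: a_def)
    finally show ?case
      using elim by (simp add: K_def power_add power2_eq_square field_simps)
  qed
  then have "((\<lambda>w. ?err w / w ^ (2 * k + 2)) \<longlongrightarrow> K 0) (at 0)"
    using \<open>isCont K 0\<close> by (simp add: isCont_def tendsto_cong)
  then have "?err \<in> O[at 0](\<lambda>w. w ^ (2 * k + 2))"
    by (rule bigoI_tendsto) (simp add: eventually_at_filter)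
  moreover have "- c \<noteq> 0"
    using \<open>c \<noteq> 0\<close> by simp
  ultimately show ?thesis
    unfolding maximally_flat_of_order_def by blast
qed

lemma pade_P_norm_square_imag_axis_expansion:
  obtains g where "isCont g 0"
    and "\<And>w. (cmod (pade_P n m (\<i> * of_real w)))\<^sup>2 = 1 + w\<^sup>2 * g w"
proof -
  obtain g where "isCont g 0" and "\<And>w. (cmod (\<Sum>i\<le>n. of_real (fps_nth (pade_P_fps n m) i) * (\<i> * of_real w) ^ i))\<^sup>2 = 1 + w\<^sup>2 * g w"
    by (rule norm_square_sum_imag_axis_expansion[of n "pade_P_fps n m"])
      (simp_all add: fps_nth_pade_P_fps_eq_0 fps_nth_pade_P_fps_0)
  then show thesis
    by (intro that[of g]) (simp_all add: pade_P_eq_sum)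
qed

lemma pade_norm_square_difference_imag_axis:
  assumes "m < n" and "n \<le> m + 2"
  shows "(cmod (pade_P n m (\<i> * of_real w)))\<^sup>2 - (cmod (pade_Q n m (\<i> * of_real w)))\<^sup>2
       = (fps_nth (pade_P_fps n m) n)\<^sup>2 * w ^ (2 * n)"
proof -
  let ?z = "\<i> * of_real w"
  have "m \<le> n"
    using \<open>m < n\<close> by simp
  have "of_real ((cmod (pade_P n m ?z))\<^sup>2 - (cmod (pade_Q n m ?z))\<^sup>2)
      = pade_P n m ?z * pade_P n m (- ?z) - pade_Q n m ?z * pade_Q n m (- ?z)"
    unfolding of_real_diff pade_P_eq_sum pade_Q_eq_sum[OF \<open>m \<le> n\<close>] norm_square_sum_real_coeffs
    by simp
  also have "\<dots> = of_real ((-1) ^ n * (fps_nth (pade_P_fps n m) n)\<^sup>2) * ?z ^ (2 * n)"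
    by (rule pade_even_product_difference[OF assms])
  also have "?z ^ (2 * n) = of_real ((-1) ^ n * w ^ (2 * n))"
  proof -
    have "?z ^ (2 * n) = of_real ((- (w\<^sup>2)) ^ n)"
      by (simp add: power_mult power_mult_distrib)
    then show ?thesis
      by (simp only: power_minus[of "w\<^sup>2"] power_mult)
  qed
  finally show ?thesis
    by (simp only: of_real_mult[symmetric] of_real_eq_iff) (simp flip: power_add)
qed

theorem theorem5:
  fixes n m :: nat
  assumes "(n \<ge> 1 \<and> m = n - 1) \<or> (n \<ge> 2 \<and> m = n - 2)"
  shows "maximally_flat_of_order (pade_H n m) n"
proof -
  have "m < n" and "n \<le> m + 2"
    using assms by auto
  obtain g where "isCont g 0" and near_1: "\<And>w. (cmod (pade_P n m (\<i> * of_real w)))\<^sup>2 = 1 + w\<^sup>2 * g w"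
    using pade_P_norm_square_imag_axis_expansion[of n m] by blast
  have "(fps_nth (pade_P_fps n m) n)\<^sup>2 \<noteq> 0"
    using fps_nth_pade_P_fps_top_pos[of n m] by simp
  then show ?thesis
    unfolding pade_H_def[abs_def]
    by (rule maximally_flat_of_order_quotient[OF near_1 \<open>isCont g 0\<close>
        pade_norm_square_difference_imag_axis[OF \<open>m < n\<close> \<open>n \<le> m + 2\<close>]])
qed

end
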